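(* Consider $K$ devices with local datasets $\mathcal D_1,\dots,\mathcal D_K$, $\mathcal D=\bigcup_k\mathcal D_k$, $|\mathcal D|=\sum_k|\mathcal D_k|$, and in round $t$ dropout rates $\gamma_{k,t}\in[0,1)$ and regularization coefficient $\lambda_t>0$. Suppose that for every device $k$ the hypotheses below hold. For each $k$ let $j_k$ be drawn uniformly from the indices of $\mathcal D_k$, let $\mathcal D^{\{j\}}$ denote the collection of datasets $\mathcal D_k^{j_k}=\mathcal D_k\setminus\{\boldsymbol x_{j_k}\}$, and let $\boldsymbol x_{\{j\}}=(\boldsymbol x_{j_1},\dots,\boldsymbol x_{j_K})$. Then $$\mathbb E_{\mathcal D,\{j\}}\Big|\mathcal L'_{\{\nu_{k,t}\}}\big(\boldsymbol\theta_{\mathcal L'}(\mathcal D^{\{j\}}),\boldsymbol x_{\{j\}}\big)-\mathcal L'_{\{\nu_{k,t}\}}\big(\boldsymbol\theta_{\mathcal L'}(\mathcal D),\boldsymbol x_{\{j\}}\big)\Big|\le\sum_{k=1}^K\frac{2\eta^2}{\big(\Lambda_{k,t,\min}+2\lambda_t(2\gamma_{k,t}-\gamma_{k,t}^2)\big)|\mathcal D|}.$$ Hypotheses, for each $k$ (with $\hat{\boldsymbol\theta}_k=\boldsymbol\theta_{\ell_{k,\lambda_t}}(\mathcal D_k)$, $\hat{\boldsymbol\theta}_k^{j}=\boldsymbol\theta_{\ell_{k,\lambda_t}}(\mathcal D_k^{j})$): (i) $\theta\mapsto\ell_{k,\lambda_t}(\theta,\boldsymbol x)$ is $\eta$-Lipschitz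 for every $\boldsymbol x$; (ii) $\hat{\boldsymbol\theta}_k^{j}$ is close to $\hat{\boldsymbol\theta}_k$ in the sense that the second-order Taylor expansion of $\ell_{k,\lambda_t}(\cdot;\mathcal D_k)$ about $\hat{\boldsymbol\theta}_k$ is exact at $\hat{\boldsymbol\theta}_k^{j}$; (iii) $\nabla^2\ell_{k,\lambda_t}(\hat{\boldsymbol\theta}_k;\mathcal D_k)$ is positive semidefinite and $\Lambda_{k,t,\min}$ is the smallest eigenvalue of the Hessian of the unregularized empirical loss $\ell_k$ at $\hat{\boldsymbol\theta}_k$.
   Context: Pre-trained parameters $\boldsymbol\theta_0$; per-sample loss $\ell(\boldsymbol\theta,\boldsymbol x)$; datasets consist of i.i.d. samples. Regularized per-sample loss of device $k$: $\ell_{k,\lambda_t}(\boldsymbol\theta,\boldsymbol x)=\ell(\boldsymbol\theta,\boldsymbol x)+\lambda_t\,\mathbb E_{\boldsymbol d}\|\boldsymbol d\odot(\boldsymbol\theta-\boldsymbol\theta_0)\|_2^2=\ell(\boldsymbol\theta,\boldsymbol x)+\lambda_t(2\gamma_{k,t}-\gamma_{k,t}^2)\|\boldsymbol\theta-\boldsymbol\theta_0\|_2^2$, where $\boldsymbol d$ has i.i.d. Bernoulli$(2\gamma_{k,t}-\gamma_{k,t}^2)$ entries; regularized empirical loss $\ell_{k,\lambda_t}(\boldsymbol\theta;S)$ is the average of $\ell$ over $S$ plus the same penalty, and $\boldsymbol\theta_{\ell_{k,\lambda_t}}(S)$ is its minimizer. The global regularized objective is $\mathcal L'_{\{\nu_{k,t}\}}=\sum_{k}\frac{|\mathcal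 D_k|}{|\mathcal D|}\min_{\boldsymbol\theta_k}\ell_{k,\lambda_t}(\boldsymbol\theta_k;\mathcal D_k)$, so its minimizer $\boldsymbol\theta_{\mathcal L'}(\mathcal D)$ is the tuple of per-device minimizers $(\hat{\boldsymbol\theta}_k)_k$ (and $\boldsymbol\theta_{\mathcal L'}(\mathcal D^{\{j\}})=(\hat{\boldsymbol\theta}_k^{j_k})_k$); its per-sample value at $(\boldsymbol\theta_k)_k$ on $\boldsymbol x_{\{j\}}$ is $\sum_k\frac{|\mathcal D_k|}{|\mathcal D|}\ell_{k,\lambda_t}(\boldsymbol\theta_k,\boldsymbol x_{j_k})$. *)

theory Defs
  imports "HOL-Analysis.Analysis" "HOL-Probability.Probability"
begin

definition grad :: "(real^'n \<Rightarrow> real) \<Rightarrow> real^'n \<Rightarrow> real^'n" where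
  "grad f x = (THE g. (f has_derivative (\<lambda>h. g \<bullet> h)) (at x))"

definition twice_differentiable_at :: "(real^'n \<Rightarrow> real) \<Rightarrow> real^'n \<Rightarrow> bool" where
  "twice_differentiable_at f x \<longleftrightarrow>
     (\<exists>S. open S \<and> x \<in> S \<and> (\<forall>y\<in>S. f differentiable (at y)) \<and> grad f differentiable (at x))"

definition hess :: "(real^'n \<Rightarrow> real) \<Rightarrow> real^'n \<Rightarrow> real^'n^'n" where
  "hess f x = (THE H. (grad f has_derivative (\<lambda>h. H *v h)) (at x))"

definition is_eigenvalue :: "real^'n^'n \<Rightarrow> real \<Rightarrow> bool" where
  "is_eigenvalue A \<mu> \<longleftrightarrow> (\<exists>v. v \<noteq> 0 \<and> A *v v = \<mu> *\<^sub>R v)"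

definition is_smallest_eigenvalue :: "real^'n^'n \<Rightarrow> real \<Rightarrow> bool" where
  "is_smallest_eigenvalue A \<mu> \<longleftrightarrow> is_eigenvalue A \<mu> \<and> (\<forall>\<nu>. is_eigenvalue A \<nu> \<longrightarrow> \<mu> \<le> \<nu>)"

definition psd :: "real^'n^'n \<Rightarrow> bool" where
  "psd A \<longleftrightarrow> (\<forall>v. 0 \<le> v \<bullet> (A *v v))"

text \<open>Keep-probability factor 2 gamma - gamma^2 of the dropout-induced penalty.\<close>
definition keepf :: "real \<Rightarrow> real" where
  "keepf g = 2 * g - g\<^sup>2"

definition reg_loss ::
  "(real^'n \<Rightarrow> 'x \<Rightarrow> real) \<Rightarrow> real^'n \<Rightarrow> real \<Rightarrow> real \<Rightarrow> real^'n \<Rightarrow> 'x \<Rightarrow> real" where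
  "reg_loss l \<theta>0 lam gam \<theta> x = l \<theta> x + lam * keepf gam * (norm (\<theta> - \<theta>0))\<^sup>2"

text \<open>Unregularized empirical loss: average of l over the dataset S (a list, i.e. with
  multiplicities).\<close>
definition emp_loss :: "(real^'n \<Rightarrow> 'x \<Rightarrow> real) \<Rightarrow> 'x list \<Rightarrow> real^'n \<Rightarrow> real" where
  "emp_loss l S \<theta> = sum_list (map (l \<theta>) S) / real (length S)"

definition reg_emp_loss ::
  "(real^'n \<Rightarrow> 'x \<Rightarrow> real) \<Rightarrow> real^'n \<Rightarrow> real \<Rightarrow> real \<Rightarrow> 'x list \<Rightarrow> real^'n \<Rightarrow> real" where
  "reg_emp_loss l \<theta>0 lam gam S \<theta> = emp_loss l S \<theta> + lam * keepf gam * (norm (\<theta> - \<theta>0))\<^sup>2"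

definition loo :: "'x list \<Rightarrow> nat \<Rightarrow> 'x list" where
  "loo S j = take j S @ drop (Suc j) S"

text \<open>Device k (k < K) has n k samples; a joint sample omega assigns to the pair (k,i)
  the i-th sample of device k.\<close>
definition sample_index :: "nat \<Rightarrow> (nat \<Rightarrow> nat) \<Rightarrow> (nat \<times> nat) set" where
  "sample_index K n = Sigma {..<K} (\<lambda>k. {..<n k})"

definition dataset :: "(nat \<Rightarrow> nat) \<Rightarrow> (nat \<times> nat \<Rightarrow> 'x) \<Rightarrow> nat \<Rightarrow> 'x list" where
  "dataset n \<omega> k = map (\<lambda>i. \<omega> (k, i)) [0..<n k]"

definition Lprime_sample ::
  "(real^'n \<Rightarrow> 'x \<Rightarrow> real) \<Rightarrow> real^'n \<Rightarrow> real \<Rightarrow> (nat \<Rightarrow> real) \<Rightarrow> nat \<Rightarrow> (nat \<Rightarrow> nat)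
     \<Rightarrow> (nat \<Rightarrow> real^'n) \<Rightarrow> (nat \<Rightarrow> 'x) \<Rightarrow> real" where
  "Lprime_sample l \<theta>0 lam gam K n thetas xs =
     (\<Sum>k<K. real (n k) / real (\<Sum>k'<K. n k') * reg_loss l \<theta>0 lam (gam k) (thetas k) (xs k))"

end

theory Submission
  imports Defs
begin

text \<open>
  Fix a device with dataset \<open>D\<close> of size \<open>m\<close>, full minimizer \<open>\<theta>\<close> and leave-one-out minimizer
  \<open>\<theta>'\<close>; let \<open>r\<close> be the regularized loss of the removed sample and \<open>L\<close>, \<open>L'\<close> the regularized
  empirical losses with and without it. Since \<open>L = r/m + (m-1)/m L'\<close> and \<open>\<theta>'\<close> minimizes \<open>L'\<close>,
  \<open>L(\<theta>') - L(\<theta>) \<le> (r(\<theta>') - r(\<theta>))/m \<le> \<eta> \<parallel>\<theta>' - \<theta>\<parallel>/m\<close>.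
  Conversely the exact second-order expansion at \<open>\<theta>\<close>, where the gradient vanishes, gives
  \<open>L(\<theta>') - L(\<theta>) \<ge> (\<Lambda> + 2\<lambda>(2\<gamma> - \<gamma>\<^sup>2)) \<parallel>\<theta>' - \<theta>\<parallel>\<^sup>2 / 2\<close>: the Hessian of the
  empirical loss is symmetric, so its quadratic form is bounded below by its smallest eigenvalue.
  Hence \<open>\<parallel>\<theta>' - \<theta>\<parallel> \<le> 2\<eta> / ((\<Lambda> + 2\<lambda>(2\<gamma> - \<gamma>\<^sup>2)) m)\<close>, and by Lipschitz continuity the
  sample loss moves by at most \<open>2\<eta>\<^sup>2 / ((\<Lambda> + 2\<lambda>(2\<gamma> - \<gamma>\<^sup>2)) m)\<close>. Weighting by \<open>m/|D|\<close>
  and summing over the devices bounds the integrand for every draw, hence its expectation.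
\<close>

lemma grad_eqI:
  fixes f :: "real^'n \<Rightarrow> real"
  assumes "(f has_derivative (\<lambda>h. g \<bullet> h)) (at x)"
  shows "grad f x = g"
  unfolding grad_def
proof (rule the_equality)
  show "(f has_derivative (\<lambda>h. g \<bullet> h)) (at x)" by fact
  fix g' assume "(f has_derivative (\<lambda>h. g' \<bullet> h)) (at x)"
  then have "(\<lambda>h. g' \<bullet> h) = (\<lambda>h. g \<bullet> h)" using assms by (rule has_derivative_unique)
  then have "(g' - g) \<bullet> (g' - g) = 0" by (metis inner_diff_left right_minus_eq)
  then show "g' = g" by simp
qed

lemma has_derivative_grad:
  fixes f :: "real^'n \<Rightarrow> real"
  assumes "f differentiable (at x)"
  shows "(f has_derivative (\<lambda>h. grad f x \<bullet> h)) (at x)"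
proof -
  obtain D where D: "(f has_derivative D) (at x)" using assms by (auto simp: differentiable_def)
  have "D = (\<lambda>h. adjoint D 1 \<bullet> h)"
    using adjoint_works[OF has_derivative_linear[OF D]] by (auto simp: fun_eq_iff inner_commute)
  with D show ?thesis using grad_eqI by metis
qed

lemma hess_eqI:
  fixes f :: "real^'n \<Rightarrow> real"
  assumes "(grad f has_derivative (\<lambda>h. H *v h)) (at x)"
  shows "hess f x = H"
  unfolding hess_def
proof (rule the_equality)
  show "(grad f has_derivative (\<lambda>h. H *v h)) (at x)" by fact
  fix H' assume "(grad f has_derivative (\<lambda>h. H' *v h)) (at x)"
  then have "(\<lambda>h. H' *v h) = (\<lambda>h. H *v h)" using assms by (rule has_derivative_unique)
  then show "H' = H" by (metis matrix_eq)
qed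

lemma has_derivative_hess:
  fixes f :: "real^'n \<Rightarrow> real"
  assumes "grad f differentiable (at x)"
  shows "(grad f has_derivative (\<lambda>h. hess f x *v h)) (at x)"
proof -
  obtain D where D: "(grad f has_derivative D) (at x)" using assms by (auto simp: differentiable_def)
  have "D = (\<lambda>h. matrix D *v h)"
    using matrix_works has_derivative_linear[OF D] by (auto simp: fun_eq_iff)
  with D show ?thesis using hess_eqI by metis
qed

lemma grad_eq_0_at_min:
  fixes f :: "real^'n \<Rightarrow> real"
  assumes "f differentiable (at x)" and "\<And>y. f x \<le> f y"
  shows "grad f x = 0"
proof -
  have "(\<lambda>h. grad f x \<bullet> h) = (\<lambda>h. 0)"
    using has_derivative_local_min[OF has_derivative_grad[OF assms(1)]] assms(2) by simp
  then have "grad f x \<bullet> grad f x = 0" by metis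
  then show ?thesis by simp
qed

section \<open>Symmetry of the Hessian\<close>

lemma norm_scaleR_add_le:
  fixes u v :: "'a::real_normed_vector"
  assumes "0 \<le> s" "s \<le> h" "0 \<le> t" "t \<le> h"
  shows "norm (s *\<^sub>R u + t *\<^sub>R v) \<le> h * (norm u + norm v)"
proof -
  have "norm (s *\<^sub>R u + t *\<^sub>R v) \<le> s * norm u + t * norm v"
    using norm_triangle_ineq[of "s *\<^sub>R u" "t *\<^sub>R v"] assms by simp
  also have "\<dots> \<le> h * (norm u + norm v)"
    using assms by (simp add: distrib_left add_mono mult_right_mono)
  finally show ?thesis .
qed

lemma mixed_difference_mvt:
  fixes f :: "real^'n \<Rightarrow> real"
  assumes deriv: "\<And>y. y \<in> ball x r \<Longrightarrow> (f has_derivative (\<lambda>k. g y \<bullet> k)) (at y)"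
    and "0 < h" and "h * (norm u + norm v) < r"
  obtains \<xi> where "0 < \<xi>" "\<xi> < h"
    and "f (x + (h *\<^sub>R v + h *\<^sub>R u)) - f (x + h *\<^sub>R u) - f (x + h *\<^sub>R v) + f x
         = h * ((g (x + (h *\<^sub>R v + \<xi> *\<^sub>R u)) - g (x + \<xi> *\<^sub>R u)) \<bullet> u)"
proof -
  define \<phi> where "\<phi> s t = f (x + (s *\<^sub>R v + t *\<^sub>R u))" for s t
  have line: "((\<phi> s) has_real_derivative g (x + (s *\<^sub>R v + t *\<^sub>R u)) \<bullet> u) (at t)"
    if "0 \<le> s" "s \<le> h" "0 \<le> t" "t \<le> h" for s t
  proof -
    have "norm (s *\<^sub>R v + t *\<^sub>R u) < r"
      using norm_scaleR_add_le[of t h s u v] that assms(3) by (simp add: add.commute[of "s *\<^sub>R v"])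
    moreover have "x + w \<in> ball x r" if "norm w < r" for w
      using that by (simp add: dist_norm)
    ultimately have "x + (s *\<^sub>R v + t *\<^sub>R u) \<in> ball x r" by blast
    moreover have "((\<lambda>t. x + (s *\<^sub>R v + t *\<^sub>R u)) has_derivative (\<lambda>d. d *\<^sub>R u)) (at t)"
      by (auto intro!: derivative_eq_intros)
    ultimately have "(\<phi> s has_derivative (\<lambda>d. g (x + (s *\<^sub>R v + t *\<^sub>R u)) \<bullet> (d *\<^sub>R u))) (at t)"
      unfolding \<phi>_def using has_derivative_compose deriv by blast
    then show ?thesis
      by (simp add: has_field_derivative_def mult.commute[of _ "g _ \<bullet> u"])
  qed
  have "((\<lambda>t. \<phi> h t - \<phi> 0 t) has_real_derivative
      g (x + (h *\<^sub>R v + t *\<^sub>R u)) \<bullet> u - g (x + (0 *\<^sub>R v + t *\<^sub>R u)) \<bullet> u) (at t)"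
    if "0 \<le> t" "t \<le> h" for t
    by (rule DERIV_diff[OF line line]) (use that \<open>0 < h\<close> in auto)
  from MVT2[OF \<open>0 < h\<close> this] obtain \<xi> where "0 < \<xi>" "\<xi> < h" and
    "(\<phi> h h - \<phi> 0 h) - (\<phi> h 0 - \<phi> 0 0)
      = (h - 0) * (g (x + (h *\<^sub>R v + \<xi> *\<^sub>R u)) \<bullet> u - g (x + (0 *\<^sub>R v + \<xi> *\<^sub>R u)) \<bullet> u)"
    by blast
  then show ?thesis
    using that[of \<xi>] by (simp add: \<phi>_def inner_diff_left)
qed

lemma mixed_difference_approx:
  fixes f :: "real^'n \<Rightarrow> real"
  assumes deriv: "\<And>y. y \<in> ball x r \<Longrightarrow> (f has_derivative (\<lambda>k. g y \<bullet> k)) (at y)"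
    and remainder: "\<And>y. norm y < r \<Longrightarrow> norm (g (x + y) - g x - H *v y) \<le> \<epsilon> * norm y"
    and "0 \<le> \<epsilon>" "0 < h" and hr: "h * (norm u + norm v) < r"
  shows "\<bar>f (x + (h *\<^sub>R v + h *\<^sub>R u)) - f (x + h *\<^sub>R u) - f (x + h *\<^sub>R v) + f x
           - h\<^sup>2 * (u \<bullet> (H *v v))\<bar> \<le> 2 * \<epsilon> * h\<^sup>2 * (norm u + norm v)\<^sup>2"
proof -
  define N where "N = norm u + norm v"
  obtain \<xi> where \<xi>: "0 < \<xi>" "\<xi> < h" and mvt:
    "f (x + (h *\<^sub>R v + h *\<^sub>R u)) - f (x + h *\<^sub>R u) - f (x + h *\<^sub>R v) + f x
     = h * ((g (x + (h *\<^sub>R v + \<xi> *\<^sub>R u)) - g (x + \<xi> *\<^sub>R u)) \<bullet> u)"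
    using mixed_difference_mvt[OF deriv \<open>0 < h\<close> hr] by blast
  define a where "a = h *\<^sub>R v + \<xi> *\<^sub>R u"
  define b where "b = \<xi> *\<^sub>R u"
  have ab: "norm a \<le> h * N" "norm b \<le> h * N"
    using norm_scaleR_add_le[of h h \<xi> v u] norm_scaleR_add_le[of 0 h \<xi> v u] \<xi> \<open>0 < h\<close>
    unfolding a_def b_def N_def by (simp_all add: add.commute[of "norm v" "norm u"])
  define \<rho> where "\<rho> y = g (x + y) - g x - H *v y" for y
  have \<rho>_le: "norm (\<rho> y) \<le> \<epsilon> * (h * N)" if "norm y \<le> h * N" for y
    using remainder[of y] that hr \<open>0 \<le> \<epsilon>\<close>
    by (force simp: \<rho>_def N_def intro: order_trans mult_left_mono)
  have "(g (x + a) - g (x + b)) \<bullet> u - h * (u \<bullet> (H *v v)) = (\<rho> a - \<rho> b) \<bullet> u"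
    by (simp add: a_def b_def \<rho>_def matrix_vector_right_distrib matrix_scaleR_vector_ac inner_diff_left
        inner_add_left inner_commute[of u] flip: scaleR_matrix_vector_assoc)
  also have "\<bar>\<dots>\<bar> \<le> norm (\<rho> a - \<rho> b) * norm u"
    by (rule Cauchy_Schwarz_ineq2)
  also have "\<dots> \<le> (2 * \<epsilon> * (h * N)) * N"
  proof (rule mult_mono)
    show "norm (\<rho> a - \<rho> b) \<le> 2 * \<epsilon> * (h * N)"
      using norm_triangle_ineq4[of "\<rho> a" "\<rho> b"] \<rho>_le[OF ab(1)] \<rho>_le[OF ab(2)] by linarith
  qed (use \<open>0 \<le> \<epsilon>\<close> \<open>0 < h\<close> in \<open>auto simp: N_def\<close>)
  finally have err: "\<bar>(g (x + a) - g (x + b)) \<bullet> u - h * (u \<bullet> (H *v v))\<bar> \<le> 2 * \<epsilon> * h * N\<^sup>2"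
    by (simp add: power2_eq_square mult_ac)
  have "f (x + (h *\<^sub>R v + h *\<^sub>R u)) - f (x + h *\<^sub>R u) - f (x + h *\<^sub>R v) + f x - h\<^sup>2 * (u \<bullet> (H *v v))
      = h * ((g (x + a) - g (x + b)) \<bullet> u - h * (u \<bullet> (H *v v)))"
    unfolding mvt a_def b_def by (simp add: power2_eq_square right_diff_distrib)
  also have "\<bar>\<dots>\<bar> \<le> h * (2 * \<epsilon> * h * N\<^sup>2)"
    using err \<open>0 < h\<close> by (simp add: abs_mult)
  finally show ?thesis by (simp add: N_def power2_eq_square mult_ac)
qed

lemma twice_differentiable_atE:
  fixes f :: "real^'n \<Rightarrow> real"
  assumes "twice_differentiable_at f x" and "0 < \<epsilon>"
  obtains r where "0 < r"
    and "\<And>y. y \<in> ball x r \<Longrightarrow> (f has_derivative (\<lambda>k. grad f y \<bullet> k)) (at y)"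
    and "\<And>y. norm y < r \<Longrightarrow> norm (grad f (x + y) - grad f x - hess f x *v y) \<le> \<epsilon> * norm y"
proof -
  obtain S where "open S" "x \<in> S" and diff: "\<And>y. y \<in> S \<Longrightarrow> f differentiable (at y)"
    and diff2: "grad f differentiable (at x)"
    using assms(1) unfolding twice_differentiable_at_def by blast
  obtain r0 where "0 < r0" "ball x r0 \<subseteq> S" using \<open>open S\<close> \<open>x \<in> S\<close> openE by blast
  obtain d where "0 < d" and d: "\<And>y. norm (y - x) < d \<Longrightarrow>
      norm (grad f y - grad f x - hess f x *v (y - x)) \<le> \<epsilon> * norm (y - x)"
    using has_derivative_hess[OF diff2] assms(2) unfolding has_derivative_at_alt by blast
  show ?thesis
  proof (rule that[of "min r0 d"])
    show "0 < min r0 d" using \<open>0 < r0\<close> \<open>0 < d\<close> by simp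
    show "(f has_derivative (\<lambda>k. grad f y \<bullet> k)) (at y)" if "y \<in> ball x (min r0 d)" for y
      using \<open>ball x r0 \<subseteq> S\<close> that by (intro has_derivative_grad diff) auto
    show "norm (grad f (x + y) - grad f x - hess f x *v y) \<le> \<epsilon> * norm y" if "norm y < min r0 d" for y
      using d[of "x + y"] that by simp
  qed
qed

text \<open>
  Only the gradient is assumed differentiable, and only at \<open>x\<close>, so Schwarz's theorem does not
  apply. Instead, the mixed second difference is symmetric in \<open>u\<close> and \<open>v\<close> and approximates
  both \<open>h\<^sup>2 u \<bullet> H v\<close> and \<open>h\<^sup>2 v \<bullet> H u\<close> up to \<open>o(h\<^sup>2)\<close>.
\<close>

lemma hess_symmetric:
  fixes f :: "real^'n \<Rightarrow> real"
  assumes "twice_differentiable_at f x"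
  shows "u \<bullet> (hess f x *v v) = v \<bullet> (hess f x *v u)"
proof -
  define H where "H = hess f x"
  define N where "N = norm u + norm v"
  define \<Delta> where "\<Delta> = (\<lambda>h. f (x + (h *\<^sub>R v + h *\<^sub>R u)) - f (x + h *\<^sub>R u) - f (x + h *\<^sub>R v) + f x)"
  have "\<bar>u \<bullet> (H *v v) - v \<bullet> (H *v u)\<bar> \<le> 0 + e" if "0 < e" for e
  proof -
    define \<epsilon> where "\<epsilon> = e / (4 * N\<^sup>2 + 1)"
    have "0 < 4 * N\<^sup>2 + 1" by (simp add: add_nonneg_pos)
    then have "0 < \<epsilon>" "4 * \<epsilon> * N\<^sup>2 \<le> e"
      using \<open>0 < e\<close> by (simp_all add: \<epsilon>_def divide_le_eq distrib_left)
    obtain r where "0 < r" and deriv: "\<And>y. y \<in> ball x r \<Longrightarrow> (f has_derivative (\<lambda>k. grad f y \<bullet> k)) (at y)"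
      and remainder: "\<And>y. norm y < r \<Longrightarrow> norm (grad f (x + y) - grad f x - H *v y) \<le> \<epsilon> * norm y"
      using twice_differentiable_atE[OF assms \<open>0 < \<epsilon>\<close>] unfolding H_def by blast
    define h where "h = r / (N + 1)"
    have "0 \<le> N" by (simp add: N_def)
    with \<open>0 < r\<close> have "0 < h" "h * N < r" by (simp_all add: h_def divide_less_eq distrib_left)
    have "\<bar>\<Delta> h - h\<^sup>2 * (u \<bullet> (H *v v))\<bar> \<le> 2 * \<epsilon> * h\<^sup>2 * N\<^sup>2"
      "\<bar>\<Delta> h - h\<^sup>2 * (v \<bullet> (H *v u))\<bar> \<le> 2 * \<epsilon> * h\<^sup>2 * N\<^sup>2"
      using mixed_difference_approx[OF deriv remainder, where r=r and h=h and u=u and v=v]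
        mixed_difference_approx[OF deriv remainder, where r=r and h=h and u=v and v=u]
        \<open>0 < \<epsilon>\<close> \<open>0 < h\<close> \<open>h * N < r\<close>
      by (simp_all add: \<Delta>_def N_def add.commute)
    then have "\<bar>h\<^sup>2 * (u \<bullet> (H *v v)) - h\<^sup>2 * (v \<bullet> (H *v u))\<bar> \<le> 2 * (2 * \<epsilon> * h\<^sup>2 * N\<^sup>2)"
      by arith
    moreover have "\<bar>h\<^sup>2 * (u \<bullet> (H *v v)) - h\<^sup>2 * (v \<bullet> (H *v u))\<bar> = h\<^sup>2 * \<bar>u \<bullet> (H *v v) - v \<bullet> (H *v u)\<bar>"
      by (simp add: abs_mult flip: right_diff_distrib)
    ultimately have "h\<^sup>2 * \<bar>u \<bullet> (H *v v) - v \<bullet> (H *v u)\<bar> \<le> h\<^sup>2 * (4 * \<epsilon> * N\<^sup>2)"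
      by (simp add: mult_ac)
    then show ?thesis
      using \<open>0 < h\<close> \<open>4 * \<epsilon> * N\<^sup>2 \<le> e\<close> by simp
  qed
  then show ?thesis
    using field_le_epsilon[of "\<bar>u \<bullet> (H *v v) - v \<bullet> (H *v u)\<bar>" 0] by (simp add: H_def)
qed

section \<open>Quadratic forms and the smallest eigenvalue\<close>

lemma linear_coeff_eq_0_if_quadratic_nonneg:
  fixes a b :: real
  assumes "\<And>t. 0 \<le> 2 * t * a + t\<^sup>2 * b"
  shows "a = 0"
proof (rule ccontr)
  assume "a \<noteq> 0"
  define B where "B = \<bar>b\<bar> + 1"
  have "0 < B" "b \<le> B" by (auto simp: B_def)
  define t where "t = - a / B"
  have "2 * t * a + t\<^sup>2 * b = - 2 * a\<^sup>2 / B + a\<^sup>2 * b / B\<^sup>2"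
    by (simp add: t_def power2_eq_square field_simps)
  also have "a\<^sup>2 * b / B\<^sup>2 \<le> a\<^sup>2 * B / B\<^sup>2"
    using \<open>b \<le> B\<close> by (simp add: divide_right_mono mult_left_mono)
  also have "a\<^sup>2 * B / B\<^sup>2 = a\<^sup>2 / B" using \<open>0 < B\<close> by (simp add: power2_eq_square)
  finally have "2 * t * a + t\<^sup>2 * b \<le> - (a\<^sup>2 / B)" by simp
  moreover have "a\<^sup>2 / B > 0" using \<open>a \<noteq> 0\<close> \<open>0 < B\<close> by simp
  ultimately show False using assms[of t] by linarith
qed

lemma psd_quadratic_form_eq_0_imp_kernel:
  fixes A :: "real^'n^'n"
  assumes sym: "\<And>u v. u \<bullet> (A *v v) = v \<bullet> (A *v u)"
    and "psd A" and "v \<bullet> (A *v v) = 0"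
  shows "A *v v = 0"
proof -
  have "w \<bullet> (A *v v) = 0" for w
  proof (rule linear_coeff_eq_0_if_quadratic_nonneg)
    fix t :: real
    have "(v + t *\<^sub>R w) \<bullet> (A *v (v + t *\<^sub>R w)) = 2 * t * (w \<bullet> (A *v v)) + t\<^sup>2 * (w \<bullet> (A *v w))"
      using sym[of v w] \<open>v \<bullet> (A *v v) = 0\<close>
      by (simp add: matrix_vector_right_distrib matrix_scaleR_vector_ac inner_add_left inner_add_right
          power2_eq_square algebra_simps flip: scaleR_matrix_vector_assoc)
    then show "0 \<le> 2 * t * (w \<bullet> (A *v v)) + t\<^sup>2 * (w \<bullet> (A *v w))"
      using \<open>psd A\<close> unfolding psd_def by metis
  qed
  from this[of "A *v v"] show ?thesis by simp
qed

lemma quadratic_form_attains_min_on_sphere: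
  fixes A :: "real^'n^'n"
  obtains v0 where "norm v0 = 1" and "\<And>v. (v0 \<bullet> (A *v v0)) * (norm v)\<^sup>2 \<le> v \<bullet> (A *v v)"
proof -
  define q where "q v = v \<bullet> (A *v v)" for v
  have "sphere (0::real^'n) 1 \<noteq> {}" by simp
  moreover have "continuous_on (sphere 0 1) q"
    unfolding q_def by (intro continuous_intros)
  ultimately obtain v0 where v0: "v0 \<in> sphere 0 1" and min: "\<And>y. y \<in> sphere 0 1 \<Longrightarrow> q v0 \<le> q y"
    using continuous_attains_inf[OF compact_sphere] by blast
  have "q v0 * (norm v)\<^sup>2 \<le> q v" for v
  proof (cases "v = 0")
    case True
    then show ?thesis by (simp add: q_def)
  next
    case False
    then have "q v0 \<le> q (inverse (norm v) *\<^sub>R v)" by (intro min) simp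
    also have "\<dots> = q v / (norm v)\<^sup>2"
      by (simp add: q_def matrix_scaleR_vector_ac power2_eq_square divide_inverse mult_ac
          flip: scaleR_matrix_vector_assoc)
    finally show ?thesis using False by (simp add: field_simps)
  qed
  with v0 show ?thesis using that by (simp add: q_def)
qed

lemma smallest_eigenvalue_le_quadratic_form:
  fixes A :: "real^'n^'n"
  assumes sym: "\<And>u v. u \<bullet> (A *v v) = v \<bullet> (A *v u)"
    and "is_smallest_eigenvalue A \<Lambda>"
  shows "\<Lambda> * (norm v)\<^sup>2 \<le> v \<bullet> (A *v v)"
proof -
  obtain v0 where "norm v0 = 1" and min: "\<And>v. (v0 \<bullet> (A *v v0)) * (norm v)\<^sup>2 \<le> v \<bullet> (A *v v)"
    using quadratic_form_attains_min_on_sphere by blast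
  define m where "m = v0 \<bullet> (A *v v0)"
  \<comment> \<open>\<open>A - m I\<close> is positive semidefinite with vanishing form at \<open>v0\<close>, so \<open>v0\<close> is an eigenvector.\<close>
  define B where "B = A - m *\<^sub>R mat 1"
  have Bv: "B *v v = A *v v - m *\<^sub>R v" for v
    by (simp add: B_def matrix_vector_mult_diff_rdistrib flip: scaleR_matrix_vector_assoc)
  have "B *v v0 = 0"
  proof (rule psd_quadratic_form_eq_0_imp_kernel)
    show "u \<bullet> (B *v v) = v \<bullet> (B *v u)" for u v
      using sym[of u v] by (simp add: Bv inner_diff_right inner_commute)
    show "psd B"
      using min by (simp add: psd_def Bv inner_diff_right power2_norm_eq_inner m_def)
    show "v0 \<bullet> (B *v v0) = 0"
      using \<open>norm v0 = 1\<close> by (simp add: Bv inner_diff_right m_def power2_norm_eq_inner[symmetric])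
  qed
  then have "is_eigenvalue A m"
    using \<open>norm v0 = 1\<close> unfolding is_eigenvalue_def by (intro exI[of _ v0]) (auto simp: Bv)
  then have "\<Lambda> \<le> m" using assms(2) by (simp add: is_smallest_eigenvalue_def)
  then have "\<Lambda> * (norm v)\<^sup>2 \<le> m * (norm v)\<^sup>2" by (simp add: mult_right_mono)
  also have "\<dots> \<le> v \<bullet> (A *v v)" using min by (simp add: m_def)
  finally show ?thesis .
qed

lemma has_derivative_add_sqnorm:
  fixes E :: "real^'n \<Rightarrow> real"
  assumes "E differentiable (at y)"
  shows "((\<lambda>\<theta>. E \<theta> + c * (norm (\<theta> - \<theta>0))\<^sup>2) has_derivative
           (\<lambda>h. (grad E y + (2 * c) *\<^sub>R (y - \<theta>0)) \<bullet> h)) (at y)"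
proof -
  have "((\<lambda>\<theta>. E \<theta> + c * ((\<theta> - \<theta>0) \<bullet> (\<theta> - \<theta>0))) has_derivative
      (\<lambda>h. grad E y \<bullet> h + c * ((y - \<theta>0) \<bullet> h + h \<bullet> (y - \<theta>0)))) (at y)"
    using has_derivative_grad[OF assms] by (auto intro!: derivative_eq_intros)
  then show ?thesis
    by (simp add: power2_norm_eq_inner inner_add_left inner_commute algebra_simps)
qed

lemma hess_add_sqnorm:
  fixes E :: "real^'n \<Rightarrow> real"
  assumes "twice_differentiable_at E x"
  shows "hess (\<lambda>\<theta>. E \<theta> + c * (norm (\<theta> - \<theta>0))\<^sup>2) x = hess E x + (2 * c) *\<^sub>R mat 1"
proof (rule hess_eqI)
  obtain S where "open S" "x \<in> S" and diff: "\<And>y. y \<in> S \<Longrightarrow> E differentiable (at y)"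
    and diff2: "grad E differentiable (at x)"
    using assms unfolding twice_differentiable_at_def by blast
  have "((\<lambda>y. grad E y + (2 * c) *\<^sub>R (y - \<theta>0)) has_derivative
      (\<lambda>h. hess E x *v h + (2 * c) *\<^sub>R h)) (at x)"
    by (auto intro!: derivative_eq_intros has_derivative_hess[OF diff2])
  then have "(grad (\<lambda>\<theta>. E \<theta> + c * (norm (\<theta> - \<theta>0))\<^sup>2) has_derivative
      (\<lambda>h. hess E x *v h + (2 * c) *\<^sub>R h)) (at x)"
  proof (rule has_derivative_transform_within_open[OF _ \<open>open S\<close> \<open>x \<in> S\<close>])
    show "grad E y + (2 * c) *\<^sub>R (y - \<theta>0) = grad (\<lambda>\<theta>. E \<theta> + c * (norm (\<theta> - \<theta>0))\<^sup>2) y"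
      if "y \<in> S" for y
      using grad_eqI[OF has_derivative_add_sqnorm[OF diff[OF that]]] by simp
  qed
  then show "(grad (\<lambda>\<theta>. E \<theta> + c * (norm (\<theta> - \<theta>0))\<^sup>2) has_derivative
      (\<lambda>h. (hess E x + (2 * c) *\<^sub>R mat 1) *v h)) (at x)"
    by (simp add: matrix_vector_mult_add_rdistrib flip: scaleR_matrix_vector_assoc)
qed

lemma reg_emp_loss_eq:
  "reg_emp_loss l \<theta>0 lam g D = (\<lambda>\<theta>. emp_loss l D \<theta> + lam * keepf g * (norm (\<theta> - \<theta>0))\<^sup>2)"
  by (simp add: fun_eq_iff reg_emp_loss_def)

lemma grad_reg_emp_loss_eq_0_at_min:
  assumes "emp_loss l D differentiable (at th)"
    and "\<forall>\<theta>. reg_emp_loss l \<theta>0 lam g D th \<le> reg_emp_loss l \<theta>0 lam g D \<theta>"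
  shows "grad (reg_emp_loss l \<theta>0 lam g D) th = 0"
  using assms has_derivative_add_sqnorm[OF assms(1)]
  by (intro grad_eq_0_at_min) (auto simp: reg_emp_loss_eq differentiable_def)

lemma hess_reg_emp_loss_quadratic_form_ge:
  assumes "twice_differentiable_at (emp_loss l D) th"
    and "is_smallest_eigenvalue (hess (emp_loss l D) th) \<Lambda>"
  shows "(\<Lambda> + 2 * lam * keepf g) * (norm d)\<^sup>2 \<le> d \<bullet> (hess (reg_emp_loss l \<theta>0 lam g D) th *v d)"
proof -
  have "hess (reg_emp_loss l \<theta>0 lam g D) th = hess (emp_loss l D) th + (2 * (lam * keepf g)) *\<^sub>R mat 1"
    unfolding reg_emp_loss_eq by (rule hess_add_sqnorm[OF assms(1)])
  moreover have "\<Lambda> * (norm d)\<^sup>2 \<le> d \<bullet> (hess (emp_loss l D) th *v d)"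
    using smallest_eigenvalue_le_quadratic_form hess_symmetric[OF assms(1)] assms(2) by blast
  ultimately show ?thesis
    by (simp add: matrix_vector_mult_add_rdistrib inner_add_right power2_norm_eq_inner algebra_simps
        flip: scaleR_matrix_vector_assoc)
qed

section \<open>Leave-one-out stability\<close>

lemma sum_list_map_loo:
  fixes f :: "'a \<Rightarrow> 'b::comm_monoid_add"
  assumes "j < length D"
  shows "sum_list (map f D) = f (D ! j) + sum_list (map f (loo D j))"
proof -
  have "D = take j D @ D ! j # drop (Suc j) D" using assms by (simp add: id_take_nth_drop)
  then have "sum_list (map f D) = sum_list (map f (take j D @ D ! j # drop (Suc j) D))" by simp
  then show ?thesis by (simp add: loo_def ac_simps)
qed

lemma reg_emp_loss_loo:
  assumes "length D = m" "j < m"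
  shows "reg_emp_loss l \<theta>0 lam g D \<theta> = reg_loss l \<theta>0 lam g \<theta> (D ! j) / real m
     + (real m - 1) / real m * reg_emp_loss l \<theta>0 lam g (loo D j) \<theta>"
proof -
  have "length (loo D j) = m - 1" using assms by (simp add: loo_def)
  then have "sum_list (map (l \<theta>) (loo D j)) = (real m - 1) * emp_loss l (loo D j) \<theta>"
    using assms by (cases "m = 1") (simp_all add: emp_loss_def of_nat_diff)
  then have emp: "emp_loss l D \<theta> = (l \<theta> (D ! j) + (real m - 1) * emp_loss l (loo D j) \<theta>) / real m"
    using sum_list_map_loo[of j D "l \<theta>"] assms by (simp add: emp_loss_def)
  show ?thesis
    unfolding reg_emp_loss_def reg_loss_def emp using assms by (simp add: field_simps)
qed

lemma reg_emp_loss_loo_minimizer_excess_le: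
  assumes "length D = m" "j < m"
    and "reg_emp_loss l \<theta>0 lam g (loo D j) th' \<le> reg_emp_loss l \<theta>0 lam g (loo D j) th"
  shows "reg_emp_loss l \<theta>0 lam g D th' - reg_emp_loss l \<theta>0 lam g D th
         \<le> (reg_loss l \<theta>0 lam g th' (D ! j) - reg_loss l \<theta>0 lam g th (D ! j)) / real m"
proof -
  have "(real m - 1) / real m \<ge> 0" using assms(2) by simp
  with assms(3) have "(real m - 1) / real m * reg_emp_loss l \<theta>0 lam g (loo D j) th'
      \<le> (real m - 1) / real m * reg_emp_loss l \<theta>0 lam g (loo D j) th"
    by (rule mult_left_mono)
  then show ?thesis
    unfolding reg_emp_loss_loo[OF assms(1,2)] by (simp add: diff_divide_distrib)
qed

lemma reg_emp_loss_minimizer_excess_ge: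
  assumes "twice_differentiable_at (emp_loss l D) th"
    and "\<forall>\<theta>. reg_emp_loss l \<theta>0 lam g D th \<le> reg_emp_loss l \<theta>0 lam g D \<theta>"
    and "is_smallest_eigenvalue (hess (emp_loss l D) th) \<Lambda>"
    and "reg_emp_loss l \<theta>0 lam g D th' = reg_emp_loss l \<theta>0 lam g D th
          + grad (reg_emp_loss l \<theta>0 lam g D) th \<bullet> (th' - th)
          + 1/2 * ((th' - th) \<bullet> (hess (reg_emp_loss l \<theta>0 lam g D) th *v (th' - th)))"
  shows "(\<Lambda> + 2 * lam * keepf g) * (norm (th' - th))\<^sup>2 / 2
         \<le> reg_emp_loss l \<theta>0 lam g D th' - reg_emp_loss l \<theta>0 lam g D th"
proof -
  have "emp_loss l D differentiable (at th)"
    using assms(1) unfolding twice_differentiable_at_def by blast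
  then have "grad (reg_emp_loss l \<theta>0 lam g D) th = 0"
    using assms(2) by (rule grad_reg_emp_loss_eq_0_at_min)
  then show ?thesis
    using assms(4) hess_reg_emp_loss_quadratic_form_ge[OF assms(1,3), of lam g "th' - th" \<theta>0] by simp
qed

lemma loo_stability:
  assumes "length D = m" "j < m"
    and twice_diff: "twice_differentiable_at (emp_loss l D) th"
    and min_full: "\<forall>\<theta>. reg_emp_loss l \<theta>0 lam g D th \<le> reg_emp_loss l \<theta>0 lam g D \<theta>"
    and min_loo: "\<forall>\<theta>. reg_emp_loss l \<theta>0 lam g (loo D j) th' \<le> reg_emp_loss l \<theta>0 lam g (loo D j) \<theta>"
    and lipschitz: "\<eta>-lipschitz_on UNIV (\<lambda>\<theta>. reg_loss l \<theta>0 lam g \<theta> (D ! j))"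
    and taylor: "reg_emp_loss l \<theta>0 lam g D th' = reg_emp_loss l \<theta>0 lam g D th
          + grad (reg_emp_loss l \<theta>0 lam g D) th \<bullet> (th' - th)
          + 1/2 * ((th' - th) \<bullet> (hess (reg_emp_loss l \<theta>0 lam g D) th *v (th' - th)))"
    and smallest: "is_smallest_eigenvalue (hess (emp_loss l D) th) \<Lambda>"
    and C_pos: "0 < \<Lambda> + 2 * lam * keepf g"
  shows "\<bar>reg_loss l \<theta>0 lam g th' (D ! j) - reg_loss l \<theta>0 lam g th (D ! j)\<bar>
          \<le> 2 * \<eta>\<^sup>2 / ((\<Lambda> + 2 * lam * keepf g) * real m)"
proof -
  define C where "C = \<Lambda> + 2 * lam * keepf g"
  define \<delta> where "\<delta> = norm (th' - th)"
  define \<Delta>r where "\<Delta>r = reg_loss l \<theta>0 lam g th' (D ! j) - reg_loss l \<theta>0 lam g th (D ! j)"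
  have "0 < real m" "0 \<le> \<eta>" "0 \<le> \<delta>"
    using assms(2) lipschitz by (auto simp: lipschitz_on_def \<delta>_def)
  have lip: "\<bar>\<Delta>r\<bar> \<le> \<eta> * \<delta>"
    using lipschitz unfolding lipschitz_on_def \<Delta>r_def \<delta>_def by (auto simp: dist_real_def dist_norm)
  have "C * \<delta>\<^sup>2 / 2 \<le> reg_emp_loss l \<theta>0 lam g D th' - reg_emp_loss l \<theta>0 lam g D th"
    unfolding C_def \<delta>_def by (rule reg_emp_loss_minimizer_excess_ge[OF twice_diff min_full smallest taylor])
  also have "\<dots> \<le> \<Delta>r / real m"
    unfolding \<Delta>r_def using min_loo by (intro reg_emp_loss_loo_minimizer_excess_le[OF assms(1,2)]) simp
  also have "\<dots> \<le> \<eta> * \<delta> / real m"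
    using lip \<open>0 < real m\<close> by (simp add: divide_right_mono)
  finally have "\<delta> * (C * \<delta> * real m) \<le> \<delta> * (2 * \<eta>)"
    using \<open>0 < real m\<close> by (simp add: field_simps power2_eq_square)
  then have "\<delta> * real m * C \<le> 2 * \<eta>"
    using \<open>0 \<le> \<eta>\<close> \<open>0 \<le> \<delta>\<close> by (cases "\<delta> = 0") (simp_all add: mult_ac)
  moreover have "0 < C * real m" using C_pos \<open>0 < real m\<close> by (simp add: C_def)
  ultimately have "\<delta> \<le> 2 * \<eta> / (C * real m)"
    by (simp add: pos_le_divide_eq mult_ac)
  with lip \<open>0 \<le> \<eta>\<close> have "\<bar>\<Delta>r\<bar> \<le> \<eta> * (2 * \<eta> / (C * real m))"
    by (meson mult_left_mono order_trans)
  then show ?thesis by (simp add: \<Delta>r_def C_def power2_eq_square mult_ac)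
qed

lemma Lprime_sample_diff_le:
  assumes "\<forall>k<K. 0 < n k"
    and "\<And>k. k < K \<Longrightarrow> \<bar>reg_loss l \<theta>0 lam (gam k) (thetas' k) (xs k)
            - reg_loss l \<theta>0 lam (gam k) (thetas k) (xs k)\<bar> \<le> b k / real (n k)"
  shows "\<bar>Lprime_sample l \<theta>0 lam gam K n thetas' xs - Lprime_sample l \<theta>0 lam gam K n thetas xs\<bar>
         \<le> (\<Sum>k<K. b k / real (\<Sum>k'<K. n k'))"
proof -
  define N where "N = real (\<Sum>k'<K. n k')"
  define \<Delta> where "\<Delta> k = reg_loss l \<theta>0 lam (gam k) (thetas' k) (xs k)
      - reg_loss l \<theta>0 lam (gam k) (thetas k) (xs k)" for k
  have "Lprime_sample l \<theta>0 lam gam K n thetas' xs - Lprime_sample l \<theta>0 lam gam K n thetas xs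
      = (\<Sum>k<K. real (n k) / N * \<Delta> k)"
    by (simp add: Lprime_sample_def N_def \<Delta>_def sum_subtractf right_diff_distrib)
  also have "\<bar>\<dots>\<bar> \<le> (\<Sum>k<K. \<bar>real (n k) / N * \<Delta> k\<bar>)"
    by (rule sum_abs)
  also have "\<dots> \<le> (\<Sum>k<K. b k / N)"
  proof (rule sum_mono)
    fix k assume "k \<in> {..<K}"
    then have "0 < real (n k)" "\<bar>\<Delta> k\<bar> \<le> b k / real (n k)"
      using assms by (auto simp: \<Delta>_def)
    moreover have "0 \<le> N" by (simp add: N_def sum_nonneg)
    ultimately have "real (n k) / N * \<bar>\<Delta> k\<bar> \<le> real (n k) / N * (b k / real (n k))"
      by (intro mult_left_mono) auto
    then show "\<bar>real (n k) / N * \<Delta> k\<bar> \<le> b k / N"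
      using \<open>0 < real (n k)\<close> \<open>0 \<le> N\<close> by (simp add: abs_mult)
  qed
  finally show ?thesis by (simp add: N_def)
qed

lemma sum_divide_card_le:
  fixes f :: "'a \<Rightarrow> real"
  assumes "\<And>x. x \<in> A \<Longrightarrow> f x \<le> c" and "0 \<le> c"
  shows "(\<Sum>x\<in>A. f x) / real (card A) \<le> c"
proof (cases "card A = 0")
  case False
  moreover have "(\<Sum>x\<in>A. f x) \<le> real (card A) * c"
    using assms(1) by (rule sum_bounded_above)
  ultimately show ?thesis by (simp add: divide_le_eq mult.commute)
qed (simp add: assms(2))

lemma (in prob_space) integral_le_nonneg_const:
  fixes f :: "'a \<Rightarrow> real"
  assumes "\<And>x. f x \<le> c" and "0 \<le> c"
  shows "integral\<^sup>L M f \<le> c"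
proof (cases "integrable M f")
  case True
  then show ?thesis using assms(1) by (intro integral_le_const AE_I2)
next
  case False
  then show ?thesis using assms(2) by (simp add: not_integrable_integral_eq)
qed

theorem theorem2:
  fixes K :: nat
    and n :: "nat \<Rightarrow> nat"
    and M :: "nat \<Rightarrow> 'x measure"
    and l :: "real^'n \<Rightarrow> 'x \<Rightarrow> real"
    and \<theta>0 :: "real^'n"
    and lam \<eta> :: real
    and gam \<Lambda> :: "nat \<Rightarrow> real"
    and thetahat :: "nat \<Rightarrow> 'x list \<Rightarrow> real^'n"
  assumes n_pos: "\<forall>k<K. 0 < n k"
    and prob: "\<forall>k<K. prob_space (M k)"
    and gam_range: "\<forall>k<K. 0 \<le> gam k \<and> gam k < 1"
    and lam_pos: "0 < lam"
    and minimizer_full: "\<forall>k<K. \<forall>S. length S = n k \<longrightarrow>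
          (\<forall>\<theta>. reg_emp_loss l \<theta>0 lam (gam k) S (thetahat k S) \<le> reg_emp_loss l \<theta>0 lam (gam k) S \<theta>)"
    and minimizer_loo: "\<forall>k<K. \<forall>S. length S = n k \<longrightarrow> (\<forall>j<n k.
          (\<forall>\<theta>. reg_emp_loss l \<theta>0 lam (gam k) (loo S j) (thetahat k (loo S j))
                \<le> reg_emp_loss l \<theta>0 lam (gam k) (loo S j) \<theta>))"
    and lipschitz: "\<forall>k<K. \<forall>x. \<eta>-lipschitz_on UNIV (\<lambda>\<theta>. reg_loss l \<theta>0 lam (gam k) \<theta> x)"
    and twice_diff: "\<forall>k<K. \<forall>S. length S = n k \<longrightarrow>
          twice_differentiable_at (emp_loss l S) (thetahat k S)"
    and taylor_exact: "\<forall>k<K. \<forall>S. length S = n k \<longrightarrow> (\<forall>j<n k.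
          (let L = reg_emp_loss l \<theta>0 lam (gam k) S; th = thetahat k S;
               d = thetahat k (loo S j) - th
           in L (thetahat k (loo S j)) = L th + grad L th \<bullet> d + 1/2 * (d \<bullet> (hess L th *v d))))"
    and hess_psd: "\<forall>k<K. \<forall>S. length S = n k \<longrightarrow>
          psd (hess (reg_emp_loss l \<theta>0 lam (gam k) S) (thetahat k S))"
    and Lambda_min: "\<forall>k<K. \<forall>S. length S = n k \<longrightarrow>
          is_smallest_eigenvalue (hess (emp_loss l S) (thetahat k S)) (\<Lambda> k)"
    and denom_pos: "\<forall>k<K. 0 < \<Lambda> k + 2 * lam * keepf (gam k)"
  shows "integral\<^sup>L (PiM (sample_index K n) (\<lambda>p. M (fst p)))
           (\<lambda>\<omega>. (\<Sum>j\<in>PiE {..<K} (\<lambda>k. {..<n k}).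
               \<bar>Lprime_sample l \<theta>0 lam gam K n
                   (\<lambda>k. thetahat k (loo (dataset n \<omega> k) (j k)))
                   (\<lambda>k. dataset n \<omega> k ! j k)
                - Lprime_sample l \<theta>0 lam gam K n
                   (\<lambda>k. thetahat k (dataset n \<omega> k))
                   (\<lambda>k. dataset n \<omega> k ! j k)\<bar>)
             / real (card (PiE {..<K} (\<lambda>k. {..<n k}))))
         \<le> (\<Sum>k<K. 2 * \<eta>\<^sup>2 /
               ((\<Lambda> k + 2 * lam * keepf (gam k)) * real (\<Sum>k'<K. n k')))"
proof -
  have stable: "\<bar>reg_loss l \<theta>0 lam (gam k) (thetahat k (loo D j)) (D ! j)
        - reg_loss l \<theta>0 lam (gam k) (thetahat k D) (D ! j)\<bar>
      \<le> 2 * \<eta>\<^sup>2 / (\<Lambda> k + 2 * lam * keepf (gam k)) / real (n k)"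
    if "k < K" "length D = n k" "j < n k" for k D j
    using that minimizer_full minimizer_loo lipschitz twice_diff taylor_exact Lambda_min denom_pos
    unfolding Let_def divide_divide_eq_left by (intro loo_stability) simp_all
  have pointwise: "\<bar>Lprime_sample l \<theta>0 lam gam K n
                   (\<lambda>k. thetahat k (loo (dataset n \<omega> k) (j k))) (\<lambda>k. dataset n \<omega> k ! j k)
                - Lprime_sample l \<theta>0 lam gam K n
                   (\<lambda>k. thetahat k (dataset n \<omega> k)) (\<lambda>k. dataset n \<omega> k ! j k)\<bar>
      \<le> (\<Sum>k<K. 2 * \<eta>\<^sup>2 / (\<Lambda> k + 2 * lam * keepf (gam k)) / real (\<Sum>k'<K. n k'))"
    if "j \<in> PiE {..<K} (\<lambda>k. {..<n k})" for \<omega> j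
    by (rule Lprime_sample_diff_le[OF n_pos], rule stable) (use that in \<open>auto simp: dataset_def\<close>)
  have "0 \<le> (\<Sum>k<K. 2 * \<eta>\<^sup>2 / (\<Lambda> k + 2 * lam * keepf (gam k)) / real (\<Sum>k'<K. n k'))"
    using denom_pos by (intro sum_nonneg divide_nonneg_nonneg) (auto intro: less_imp_le sum_nonneg)
  moreover have "prob_space (PiM (sample_index K n) (\<lambda>p. M (fst p)))"
    by (rule prob_space_PiM) (use prob in \<open>auto simp: sample_index_def\<close>)
  ultimately show ?thesis
    unfolding divide_divide_eq_left[symmetric]
    by (intro prob_space.integral_le_nonneg_const sum_divide_card_le pointwise)
qed

end
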